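(* Let $r>0$, $n\ge 1$, $f\in C^k(D,\mathbb{R}^n)$ with $k>3$, $D\subset\mathbb{R}^{2n}$ open, $(0,0)\in D$, $f(0,0)=0$. Write $f(x,y)=\mathrm{A}x+\mathrm{B}y+\widehat f(x,y)$ with $\mathrm{A},\mathrm{B}\in\mathcal{M}_{n\times n}(\mathbb{R})$ and $\widehat f$ the nonlinear part, and consider $\dot x(t)=f(x(t),x(t-r))$. Assume that $\det(\lambda \mathrm{I}-\mathrm{A}-e^{-\lambda r}\mathrm{B})=0$ has a pair of simple roots $\pm\omega i$, $\omega>0$ (each with one-dimensional eigenspace), and that all other roots have negative real part. Let $\varphi_1,\varphi_2,\Psi_1,\langle\cdot,\cdot\rangle$, $w_{j,k}$, $f_{j,k}$, $g_{j,k}$ be as in the context, and define the vectors in $\mathbb{C}^n$ \[R_1=-g_{2,1}re^{-\omega ir}\varphi_1(0)+\frac{i}{2\omega}\overline{g}_{1,2}(e^{\omega ir}-e^{-\omega ir})\varphi_2(0)-2g_{1,1}e^{-\omega ir}\int_{-r}^0w_{2,0}(\theta)e^{-\omega i\theta}d\theta-(g_{2,0}+2\overline{g}_{1,1})e^{-\omega ir}\int_{-r}^0w_{1,1}(\theta)e^{-\omega i\theta}d\theta-\overline{g}_{0,2}e^{-\omega ir}\int_{-r}^0w_{0,2}(\theta)e^{-\omega i\theta}d\theta,\] \[R_2=g_{2,1}\varphi_1(0)+\overline{g}_{1,2}\varphi_2(0)-f_{2,1}+2g_{1,1}w_{2,0}(0)+(g_{2,0}+2\overline{g}_{1,1})w_{1,1}(0)+\overline{g}_{0,2}w_{0,2}(0).\]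 Then the (singular) linear system \[(\omega i\mathrm{I}-\mathrm{A}-\mathrm{B}e^{-\omega ir})X=\mathrm{B}R_1-R_2,\qquad X\in\mathbb{C}^n,\] has solutions.
   Context: Eigenfunctions: $\varphi_1(s)=\varphi_1(0)e^{\omega is}$, $\varphi_2(s)=\overline{\varphi_1(s)}=\overline{\varphi_1(0)}e^{-\omega is}$, $s\in[-r,0]$, where the nonzero column vector $\varphi_1(0)$ satisfies $(\omega i\mathrm{I}-\mathrm{A}-e^{-\omega ir}\mathrm{B})\varphi_1(0)=0$. Adjoint eigenvector: a nonzero row vector $\psi_1(0)$ with $\psi_1(0)(-\omega i\mathrm{I}+\mathrm{A}+\mathrm{B}e^{-\omega ir})=0$; set $\Psi_1(0)=\big[\psi_1(0)\varphi_1(0)+\psi_1(0)\mathrm{B}\varphi_1(0)e^{-\omega ir}r\big]^{-1}\psi_1(0)$ and $\Psi_1(\zeta)=\Psi_1(0)e^{-\omega i\zeta}$, $\zeta\in[0,r]$. Bilinear form on $C([0,r],\mathbb{C}^n)$ (row vectors) $\times\, C([-r,0],\mathbb{C}^n)$ (column vectors): $\langle\psi,\varphi\rangle=\psi(0)\varphi(0)+\int_{-r}^0\psi(\zeta+r)\mathrm{B}\varphi(\zeta)d\zeta$; then $\langle\Psi_1,\varphi_1\rangle=1$, $\langle\Psi_1,\varphi_2\rangle=0$. Center manifold: in $\mathcal{B}_C=C([-r,0],\mathbb{C}^n)$ with the projector $\mathcal{P}\phi=\langle\Psi_1,\phi\rangle\varphi_1+\langle\overline{\Psi_1},\phi\rangle\varphi_2$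 and $\mathcal{N}=(I-\mathcal{P})\mathcal{B}_C$, the local center manifold is the graph of a function $w(u,\overline u)=w(u\varphi_1+\overline u\varphi_2)=\sum_{j+k\ge2}\frac{1}{j!k!}w_{j,k}u^j\overline u^k$ with values in $\mathcal{N}$, $w_{j,k}\in\mathcal{B}_C$; in particular $\langle\Psi_1,w_{j,k}\rangle=0$. With $\Phi=u\varphi_1+\overline u\varphi_2+w(u,\overline u)$, write $\widehat f(\Phi(0),\Phi(-r))=\sum_{j+k\ge2}\frac{1}{j!k!}f_{j,k}u^j\overline u^k$ ($f_{j,k}\in\mathbb{C}^n$) and $g_{j,k}=\Psi_1(0)f_{j,k}$, so that the reduced equation on the center manifold is $\dot u=\omega iu+\sum_{j+k\ge2}\frac{1}{j!k!}g_{j,k}u^j\overline u^k$. The system in the claim is the one obtained for the value $w_{2,1}(0)$ of the third order coefficient $w_{2,1}$. *)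

theory Defs
  imports "HOL-Analysis.Analysis"
begin

definition cvec :: "real^'n \<Rightarrow> complex^'n" where
  "cvec x = (\<chi> i. complex_of_real (x$i))"
definition rvec :: "complex^'n \<Rightarrow> real^'n" where
  "rvec v = (\<chi> i. Re (v$i))"
definition vcnj :: "complex^'n \<Rightarrow> complex^'n" where
  "vcnj v = (\<chi> i. cnj (v$i))"
definition cmat :: "real^'n^'m \<Rightarrow> complex^'n^'m" where
  "cmat M = (\<chi> i j. complex_of_real (M$i$j))"

definition rdot :: "complex^'n \<Rightarrow> complex^'n \<Rightarrow> complex" where
  "rdot p v = (\<Sum>i\<in>UNIV. p$i * v$i)"

definition charmat :: "real^'n^'n \<Rightarrow> real^'n^'n \<Rightarrow> real \<Rightarrow> complex \<Rightarrow> complex^'n^'n" where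
  "charmat A B r lam = (\<chi> i j. (if i = j then lam else 0) - cmat A $ i $ j
                                 - exp (- lam * complex_of_real r) * cmat B $ i $ j)"
definition charfun :: "real^'n^'n \<Rightarrow> real^'n^'n \<Rightarrow> real \<Rightarrow> complex \<Rightarrow> complex" where
  "charfun A B r lam = det (charmat A B r lam)"

definition bform :: "real^'n^'n \<Rightarrow> real \<Rightarrow> (real \<Rightarrow> complex^'n) \<Rightarrow> (real \<Rightarrow> complex^'n) \<Rightarrow> complex" where
  "bform B r psi phi = rdot (psi 0) (phi 0)
      + integral {-r..0} (\<lambda>z. rdot (psi (z + r)) (cmat B *v phi z))"

definition taylor_uubar :: "nat \<Rightarrow> (complex \<Rightarrow> complex^'n) \<Rightarrow> (nat \<Rightarrow> nat \<Rightarrow> complex^'n) \<Rightarrow> bool" where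
  "taylor_uubar N G c \<longleftrightarrow> (\<forall>e>0. eventually (\<lambda>u. norm (G u -
      (\<Sum>j\<le>N. \<Sum>k\<le>N - j. (u ^ j * cnj u ^ k / (fact j * fact k)) *s c j k))
        \<le> e * norm u ^ N) (at 0))"

definition taylor_uubar_unif :: "nat \<Rightarrow> real set \<Rightarrow> (complex \<Rightarrow> real \<Rightarrow> complex^'n)
      \<Rightarrow> (nat \<Rightarrow> nat \<Rightarrow> real \<Rightarrow> complex^'n) \<Rightarrow> bool" where
  "taylor_uubar_unif N S W c \<longleftrightarrow> (\<forall>e>0. eventually (\<lambda>u. \<forall>\<theta>\<in>S. norm (W u \<theta> -
      (\<Sum>j\<le>N. \<Sum>k\<le>N - j. (u ^ j * cnj u ^ k / (fact j * fact k)) *s c j k \<theta>))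
        \<le> e * norm u ^ N) (at 0))"

text \<open>C^k on an (open) set: iterated directional derivatives up to order k exist and
  are continuous.  F ds x is the derivative of f at x along the directions in ds.\<close>
definition Ck_on :: "nat \<Rightarrow> 'a::real_normed_vector set \<Rightarrow> ('a \<Rightarrow> 'b::real_normed_vector) \<Rightarrow> bool" where
  "Ck_on k D f \<longleftrightarrow> (\<exists>F :: 'a list \<Rightarrow> 'a \<Rightarrow> 'b.
      (\<forall>x\<in>D. F [] x = f x) \<and>
      (\<forall>ds. length ds \<le> k \<longrightarrow> continuous_on D (F ds)) \<and>
      (\<forall>ds. length ds < k \<longrightarrow> (\<forall>x\<in>D. (F ds has_derivative (\<lambda>h. F (h # ds) x)) (at x))))"

definition dde_solution :: "((real^'n) \<times> (real^'n) \<Rightarrow> real^'n) \<Rightarrow> real \<Rightarrow> ((real^'n) \<times> (real^'n)) set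
      \<Rightarrow> real \<Rightarrow> (real \<Rightarrow> real^'n) \<Rightarrow> bool" where
  "dde_solution f r D T x \<longleftrightarrow> continuous_on {-r..T} x \<and>
     (\<forall>t\<in>{0..T}. (x t, x (t - r)) \<in> D \<and>
        (x has_vector_derivative f (x t, x (t - r))) (at t within {0..T}))"

end

theory Submission
  imports Defs
begin

text \<open>
  The system \<open>M X = b\<close> with \<open>M = \<omega>iI - A - e^{-\<omega>ir}B\<close> is solvable as soon as \<open>b\<close> is annihilated by
  the left null vector \<open>\<psi>\<^sub>1(0)\<close>: since \<open>\<omega>i\<close> is a simple root, the derivative of the characteristic
  function at \<open>\<omega>i\<close> is, up to the factor \<open>\<psi>\<^sub>1(0)\<^sub>a\<close>, the determinant of \<open>M\<close> with its \<open>a\<close>-th row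
  replaced by \<open>\<psi>\<^sub>1(0)(I + re^{-\<omega>ir}B)\<close>; this bordered matrix is therefore invertible, which gives
  both the solvability criterion and the nonvanishing of the normalization defining \<open>\<Psi>\<^sub>1(0)\<close>.
  It remains to check \<open>\<Psi>\<^sub>1(0)(BR\<^sub>1 - R\<^sub>2) = 0\<close>. The terms in \<open>\<phi>\<^sub>1(0)\<close>, \<open>\<phi>\<^sub>2(0)\<close> and \<open>f\<^sub>2\<^sub>1\<close> cancel by
  the normalization \<open>\<langle>\<Psi>\<^sub>1,\<phi>\<^sub>1\<rangle> = 1\<close>, by \<open>\<langle>\<Psi>\<^sub>1,\<phi>\<^sub>2\<rangle> = 0\<close> and by \<open>g\<^sub>2\<^sub>1 = \<Psi>\<^sub>1(0)f\<^sub>2\<^sub>1\<close>; the terms in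
  \<open>w\<^sub>2\<^sub>0, w\<^sub>1\<^sub>1, w\<^sub>0\<^sub>2\<close> cancel because \<open>\<langle>\<Psi>\<^sub>1, w(u)\<rangle> = 0\<close> on the center manifold, so that every
  Taylor coefficient of \<open>w\<close> lies in the kernel of the (bounded, linear) functional \<open>\<langle>\<Psi>\<^sub>1, \<cdot>\<rangle>\<close>.
\<close>

lemma rdot_add: "rdot p (x + y) = rdot p x + rdot p y"
  by (simp add: rdot_def algebra_simps sum.distrib)

lemma rdot_diff: "rdot p (x - y) = rdot p x - rdot p y"
  by (simp add: rdot_def algebra_simps sum_subtractf)

lemma rdot_smult: "rdot p (c *s x) = c * rdot p x"
  by (simp add: rdot_def algebra_simps sum_distrib_left)

lemma rdot_smult_left: "rdot (c *s p) x = c * rdot p x"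
  by (simp add: rdot_def algebra_simps sum_distrib_left)

lemma rdot_add_left: "rdot (p + q) x = rdot p x + rdot q x"
  by (simp add: rdot_def algebra_simps sum.distrib)

lemma rdot_zero [simp]: "rdot p 0 = 0"
  by (simp add: rdot_def)

lemma rdot_zero_left [simp]: "rdot 0 x = 0"
  by (simp add: rdot_def)

lemma rdot_sum: "rdot p (\<Sum>i\<in>I. f i) = (\<Sum>i\<in>I. rdot p (f i))"
  by (induction I rule: infinite_finite_induct) (simp_all add: rdot_add)

lemma rdot_vector_matrix_mult: "rdot (p v* M) x = rdot p (M *v x)"
  unfolding rdot_def vector_matrix_mult_def matrix_vector_mult_def
  by (simp add: sum_distrib_left sum_distrib_right mult_ac) (rule sum.swap)

lemma rdot_eq_single_component:
  assumes "\<And>i. i \<noteq> a \<Longrightarrow> y $ i = 0"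
  shows "rdot p y = p $ a * y $ a"
  unfolding rdot_def using assms by (subst sum.remove[of UNIV a]) auto

lemma bounded_linear_rdot: "bounded_linear (rdot p)"
  unfolding linear_conv_bounded_linear[symmetric]
  by (rule linearI) (simp_all add: rdot_def sum.distrib algebra_simps scaleR_sum_right)

section \<open>Bordered matrices\<close>

definition row_replace :: "'n \<Rightarrow> 'a^'m \<Rightarrow> 'a^'m^'n \<Rightarrow> 'a^'m^'n" where
  "row_replace a v M = (\<chi> i. if i = a then v else M $ i)"

lemma vector_matrix_mult_eq_sum_rows:
  fixes M :: "'a::comm_semiring_1^'m^'n"
  shows "p v* M = (\<Sum>i\<in>UNIV. p $ i *s M $ i)"
  by (simp add: vec_eq_iff vector_matrix_mult_def mult.commute)

lemma det_row_replace_vector_matrix_mult: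
  fixes M :: "'a::comm_ring_1^'n^'n"
  shows "det (row_replace a (p v* M) M) = p $ a * det M"
proof -
  have "det (row_replace a (p v* M) M) = (\<Sum>j\<in>UNIV. det (\<chi> i. if i = a then p $ j *s M $ j else M $ i))"
    unfolding row_replace_def vector_matrix_mult_eq_sum_rows by (rule det_linear_row_sum) simp
  also have "\<dots> = (\<Sum>j\<in>UNIV. p $ j * det (\<chi> i. if i = a then M $ j else M $ i))"
    by (simp add: det_row_mul)
  also have "\<dots> = p $ a * det (\<chi> i. if i = a then M $ a else M $ i)"
  proof -
    have "det (\<chi> i. if i = a then M $ j else M $ i) = 0" if "j \<noteq> a" for j
      by (rule det_identical_rows[of a j]) (use that in \<open>auto simp: row_def vec_eq_iff\<close>)
    then show ?thesis
      by (subst sum.remove[of UNIV a]) auto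
  qed
  also have "(\<chi> i. if i = a then M $ a else M $ i) = M"
    by (simp add: vec_eq_iff)
  finally show ?thesis .
qed

lemma mulvec_eq_zero_if_det_nonzero:
  fixes M :: "'a::field^'n^'n"
  assumes "det M \<noteq> 0" and "M *v x = 0"
  shows "x = 0"
  using inj_matrix_vector_mult[of M] assms invertible_det_nz
  by (metis matrix_vector_mult_0_right injD)

lemma tendsto_det:
  fixes N :: "'b \<Rightarrow> 'a::real_normed_field^'n^'n"
  assumes "\<And>i j. ((\<lambda>x. N x $ i $ j) \<longlongrightarrow> L $ i $ j) F"
  shows "((\<lambda>x. det (N x)) \<longlongrightarrow> det L) F"
  unfolding det_def by (intro tendsto_intros assms)

lemma row_replace_mulvec:
  "row_replace a v M *v x = (\<chi> i. if i = a then rdot v x else (M *v x) $ i)"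
  by (simp add: vec_eq_iff row_replace_def matrix_vector_mult_def rdot_def)

text \<open>Solve the invertible bordered system with the \<open>a\<close>-th component of \<open>b\<close> replaced by \<open>0\<close>; the
  \<open>a\<close>-th equation of the original system then holds because \<open>p\<close> annihilates both \<open>M X\<close> and \<open>b\<close>.\<close>
lemma solvable_if_orthogonal_to_left_null_vector:
  fixes M :: "complex^'n^'n"
  assumes null: "p v* M = 0" and pa: "p $ a \<noteq> 0"
    and bordered: "det (row_replace a v M) \<noteq> 0" and orth: "rdot p b = 0"
  shows "\<exists>X. M *v X = b"
proof -
  obtain L' where L': "row_replace a v M ** L' = mat 1"
    using bordered invertible_det_nz unfolding invertible_def by blast
  define X where "X = L' *v (\<chi> i. if i = a then 0 else b $ i)"
  have off_a: "(M *v X - b) $ i = 0" if "i \<noteq> a" for i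
  proof -
    have "row_replace a v M *v X = (\<chi> i. if i = a then 0 else b $ i)"
      by (simp add: X_def matrix_vector_mul_assoc L')
    then have "(row_replace a v M *v X) $ i = b $ i"
      using that by simp
    then show ?thesis
      using that by (simp add: row_replace_mulvec)
  qed
  have "p $ a * (M *v X - b) $ a = rdot p (M *v X - b)"
    by (rule rdot_eq_single_component[symmetric]) (use off_a in blast)
  also have "\<dots> = 0"
    by (simp add: rdot_diff orth flip: rdot_vector_matrix_mult) (simp add: null)
  finally have "(M *v X - b) $ a = 0" using pa by simp
  with off_a have "M *v X - b = 0" by (metis vec_eq_iff zero_index)
  then show ?thesis by auto
qed

section \<open>The characteristic matrix at a simple root\<close>

lemma charmat_mulvec:
  "charmat A B r lam *v x = lam *s x - cmat A *v x - exp (- lam * of_real r) *s (cmat B *v x)"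
  by (simp add: vec_eq_iff charmat_def matrix_vector_mult_def right_diff_distrib sum_subtractf
      sum_distrib_left mult_ac if_distrib[of "\<lambda>y. _ * y"] cong: if_cong)

lemma vector_matrix_mult_charmat:
  "p v* charmat A B r lam = lam *s p - p v* cmat A - exp (- lam * of_real r) *s (p v* cmat B)"
  by (simp add: vec_eq_iff charmat_def vector_matrix_mult_def right_diff_distrib sum_subtractf
      sum_distrib_left mult_ac if_distrib[of "\<lambda>y. _ * y"] cong: if_cong)

lemma charmat_cnj: "charmat A B r (cnj lam) *v vcnj x = vcnj (charmat A B r lam *v x)"
  by (simp add: vec_eq_iff matrix_vector_mult_def charmat_def vcnj_def cmat_def exp_cnj
      if_distrib[of cnj] cong: if_cong)

lemma charmat_null_vectors_distinct_roots:
  assumes "p v* charmat A B r l1 = 0" and "charmat A B r l2 *v x = 0"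
  shows "(l1 - l2) * rdot p x
           = (exp (- l1 * of_real r) - exp (- l2 * of_real r)) * rdot p (cmat B *v x)"
proof -
  have "0 = rdot (p v* charmat A B r l1) x"
    using assms(1) by simp
  also have "\<dots> = rdot p (charmat A B r l1 *v x)"
    by (rule rdot_vector_matrix_mult)
  also have "charmat A B r l1 *v x = charmat A B r l1 *v x - charmat A B r l2 *v x"
    using assms(2) by simp
  also have "\<dots> = (l1 - l2) *s x - (exp (- l1 * of_real r) - exp (- l2 * of_real r)) *s (cmat B *v x)"
    by (simp add: charmat_mulvec algebra_simps)
  finally show ?thesis
    unfolding rdot_diff rdot_smult by (metis eq_iff_diff_eq_0)
qed

text \<open>With \<open>p\<close> a left null vector at \<open>lam0\<close>, \<open>p v* charmat lam = (lam - lam0) (p - Q lam p B)\<close> where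
  \<open>Q\<close> is the difference quotient of \<open>exp (- lam r)\<close>; substituting this for row \<open>a\<close> multiplies the
  determinant by \<open>p $ a\<close>, and \<open>Q lam \<longrightarrow> - r exp (- lam0 r)\<close>.\<close>
lemma charfun_has_field_derivative_at_root:
  fixes p :: "complex^'n" and A B :: "real^'n^'n" and a :: 'n and r :: real and lam0 :: complex
  defines "L \<equiv> row_replace a (p + (of_real r * exp (- lam0 * of_real r)) *s (p v* cmat B)) (charmat A B r lam0)"
  assumes null: "p v* charmat A B r lam0 = 0" and pa: "p $ a \<noteq> 0"
  shows "(charfun A B r has_field_derivative det L / p $ a) (at lam0)"
proof -
  define e where "e lam = exp (- lam * of_real r)" for lam :: complex
  define Q where "Q lam = (e lam - e lam0) / (lam - lam0)" for lam
  define pB where "pB = p v* cmat B"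
  define N where "N lam = row_replace a (p - Q lam *s pB) (charmat A B r lam)" for lam
  have "det (row_replace a 0 (charmat A B r lam0)) = 0"
    by (rule det_zero_row(2)[of a]) (simp add: row_replace_def row_def vec_eq_iff)
  then have root: "charfun A B r lam0 = 0"
    using det_row_replace_vector_matrix_mult[of a p "charmat A B r lam0"] pa null
    by (simp add: charfun_def)
  have quotient: "(charfun A B r lam - charfun A B r lam0) / (lam - lam0) = det (N lam) / p $ a"
    if "lam \<noteq> lam0" for lam
  proof -
    have "p v* charmat A B r lam = p v* charmat A B r lam - p v* charmat A B r lam0"
      using null by simp
    also have "\<dots> = (lam - lam0) *s p - (e lam - e lam0) *s pB"
      by (simp add: vector_matrix_mult_charmat e_def pB_def algebra_simps)
    also have "e lam - e lam0 = (lam - lam0) * Q lam"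
      using that by (simp add: Q_def)
    finally have "p v* charmat A B r lam = (lam - lam0) *s (p - Q lam *s pB)"
      by simp
    note row = this
    have "p $ a * charfun A B r lam = det (row_replace a (p v* charmat A B r lam) (charmat A B r lam))"
      by (simp add: det_row_replace_vector_matrix_mult charfun_def)
    also have "\<dots> = det (row_replace a ((lam - lam0) *s (p - Q lam *s pB)) (charmat A B r lam))"
      by (simp only: row)
    also have "\<dots> = (lam - lam0) * det (N lam)"
      unfolding N_def row_replace_def by (rule det_row_mul)
    finally show ?thesis using root that pa by (simp add: field_simps)
  qed
  have Q_lim: "(Q \<longlongrightarrow> - of_real r * e lam0) (at lam0)"
  proof -
    have "(e has_field_derivative e lam0 * (- of_real r)) (at lam0)"
      unfolding e_def by (auto intro!: derivative_eq_intros)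
    then show ?thesis by (simp add: has_field_derivative_iff Q_def[abs_def] mult.commute)
  qed
  have "((\<lambda>lam. det (N lam)) \<longlongrightarrow> det L) (at lam0)"
  proof (rule tendsto_det)
    fix i j
    show "((\<lambda>lam. N lam $ i $ j) \<longlongrightarrow> L $ i $ j) (at lam0)"
    proof (cases "i = a")
      case True
      have "((\<lambda>lam. p $ j - Q lam * pB $ j) \<longlongrightarrow> p $ j - (- of_real r * e lam0) * pB $ j) (at lam0)"
        by (intro tendsto_intros Q_lim)
      then show ?thesis
        using True by (simp add: N_def L_def row_replace_def pB_def e_def)
    next
      case False
      then show ?thesis
        by (simp add: N_def L_def row_replace_def charmat_def) (auto intro!: tendsto_intros)
    qed
  qed
  then have "((\<lambda>lam. det (N lam) / p $ a) \<longlongrightarrow> det L / p $ a) (at lam0)"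
    using pa by (intro tendsto_intros)
  then have "((\<lambda>lam. (charfun A B r lam - charfun A B r lam0) / (lam - lam0)) \<longlongrightarrow> det L / p $ a) (at lam0)"
    by (rule Lim_transform_eventually) (simp add: eventually_at_filter quotient)
  then show ?thesis by (simp add: has_field_derivative_iff)
qed

lemma det_bordered_charmat_nonzero:
  assumes "deriv (charfun A B r) lam0 \<noteq> 0"
    and "p v* charmat A B r lam0 = 0" and "p $ a \<noteq> 0"
  shows "det (row_replace a (p + (of_real r * exp (- lam0 * of_real r)) *s (p v* cmat B))
               (charmat A B r lam0)) \<noteq> 0"
  using DERIV_imp_deriv[OF charfun_has_field_derivative_at_root[OF assms(2,3)]] assms(1)
  by auto

lemma charmat_normalization_nonzero:
  assumes simple: "deriv (charfun A B r) lam0 \<noteq> 0"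
    and p_null: "p v* charmat A B r lam0 = 0" and "p \<noteq> 0"
    and x_null: "charmat A B r lam0 *v x = 0" and "x \<noteq> 0"
  shows "rdot p x + rdot p (cmat B *v x) * exp (- lam0 * of_real r) * of_real r \<noteq> 0"
proof
  assume normalization: "rdot p x + rdot p (cmat B *v x) * exp (- lam0 * of_real r) * of_real r = 0"
  obtain a where pa: "p $ a \<noteq> 0"
    using \<open>p \<noteq> 0\<close> by (metis vec_eq_iff zero_index)
  let ?L = "row_replace a (p + (of_real r * exp (- lam0 * of_real r)) *s (p v* cmat B)) (charmat A B r lam0)"
  have "?L *v x = 0"
    using normalization x_null
    by (simp add: row_replace_mulvec rdot_add_left rdot_smult_left rdot_vector_matrix_mult
        vec_eq_iff mult_ac)
  then have "x = 0"
    using mulvec_eq_zero_if_det_nonzero det_bordered_charmat_nonzero[OF simple p_null pa] by blast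
  with \<open>x \<noteq> 0\<close> show False ..
qed

lemma rdot_conj_null_vector:
  assumes p_null: "p v* charmat A B r (\<i> * of_real \<omega>) = 0"
    and x_null: "charmat A B r (\<i> * of_real \<omega>) *v x = 0" and "\<omega> > 0"
  shows "rdot p (vcnj x) = \<i> / (2 * of_real \<omega>)
           * (exp (\<i> * of_real \<omega> * of_real r) - exp (- \<i> * of_real \<omega> * of_real r))
           * rdot p (cmat B *v vcnj x)"
proof -
  have "charmat A B r (- (\<i> * of_real \<omega>)) *v vcnj x = 0"
    using charmat_cnj[of A B r "\<i> * of_real \<omega>" x] x_null by (simp add: vcnj_def vec_eq_iff)
  from charmat_null_vectors_distinct_roots[OF p_null this]
  have roots: "2 * (\<i> * of_real \<omega>) * rdot p (vcnj x)
      = (exp (- \<i> * of_real \<omega> * of_real r) - exp (\<i> * of_real \<omega> * of_real r)) * rdot p (cmat B *v vcnj x)"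
    by simp
  have "rdot p (vcnj x) = 2 * (\<i> * of_real \<omega>) * rdot p (vcnj x) / (2 * of_real \<omega>) / \<i>"
    using \<open>\<omega> > 0\<close> by simp
  also have "\<dots> = \<i> / (2 * of_real \<omega>)
           * (exp (\<i> * of_real \<omega> * of_real r) - exp (- \<i> * of_real \<omega> * of_real r))
           * rdot p (cmat B *v vcnj x)"
    unfolding roots by (simp add: divide_i algebra_simps diff_divide_distrib)
  finally show ?thesis .
qed

section \<open>Expansions in \<open>u\<close> and \<open>conj u\<close>\<close>

lemma norm_vector_smult_complex: "norm (c *s (v::complex^'n)) = norm c * norm v"
  by (simp add: norm_vec_def norm_mult L2_set_right_distrib)

lemma bounded_linear_vector_smult: "bounded_linear (\<lambda>v::complex^'n. c *s v)"
  unfolding linear_conv_bounded_linear[symmetric]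
  by (rule linearI) (simp_all add: vec_eq_iff algebra_simps)

lemma integral_vector_smult:
  fixes f :: "real \<Rightarrow> complex^'n"
  assumes "f integrable_on S"
  shows "integral S (\<lambda>x. c *s f x) = c *s integral S f"
  using integral_linear[OF assms bounded_linear_vector_smult[of c]] by (simp add: o_def)

lemma continuous_on_vector_smult:
  fixes f :: "real \<Rightarrow> complex^'n"
  assumes "continuous_on S h" "continuous_on S f"
  shows "continuous_on S (\<lambda>x. h x *s f x)"
proof -
  have eq: "(\<lambda>x. h x *s f x) = (\<lambda>x. \<chi> i. h x * f x $ i)"
    by (simp add: vec_eq_iff fun_eq_iff)
  show ?thesis
    unfolding eq using assms by (intro continuous_intros)
qed

lemma continuous_on_cvec:
  assumes "continuous_on S f"
  shows "continuous_on S (\<lambda>x. cvec (f x))"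
proof -
  have "bounded_linear (cvec :: real^'n \<Rightarrow> complex^'n)"
    unfolding linear_conv_bounded_linear[symmetric]
    by (rule linearI) (simp_all add: vec_eq_iff cvec_def, simp add: scaleR_conv_of_real)
  then show ?thesis
    using assms by (rule bounded_linear.continuous_on)
qed

lemma sum_total_degree_le_3:
  fixes F :: "nat \<Rightarrow> nat \<Rightarrow> 'a::comm_monoid_add"
  shows "(\<Sum>j\<le>3. \<Sum>k\<le>3 - j. F j k)
           = F 0 0 + F 0 1 + F 0 2 + F 0 3 + F 1 0 + F 1 1 + F 1 2 + F 2 0 + F 2 1 + F 3 0"
  by (simp add: numeral_3_eq_3 numeral_2_eq_2 ac_simps)

text \<open>Along a ray \<open>u = t z\<close> the sum is \<open>t\<^sup>2 (q z + t s z)\<close> with \<open>q\<close> the quadratic part, so \<open>q\<close>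
  vanishes; its values at \<open>1\<close>, \<open>\<i>\<close> and \<open>1 + \<i>\<close> determine its three coefficients.\<close>
lemma quadratic_coeffs_vanish_of_cubic_bound:
  fixes c :: "nat \<Rightarrow> nat \<Rightarrow> complex"
  assumes low: "c 0 0 = 0" "c 1 0 = 0" "c 0 1 = 0"
    and bound: "\<forall>\<^sub>F u in at 0. norm (\<Sum>j\<le>3. \<Sum>k\<le>3 - j. u ^ j * cnj u ^ k / (fact j * fact k) * c j k)
                                 \<le> K * norm u ^ 3"
  shows "c 2 0 = 0 \<and> c 1 1 = 0 \<and> c 0 2 = 0"
proof -
  define q where "q z = z^2 / 2 * c 2 0 + z * cnj z * c 1 1 + cnj z^2 / 2 * c 0 2" for z
  define s where "s z = z^3 / 6 * c 3 0 + z^2 * cnj z / 2 * c 2 1 + z * cnj z^2 / 2 * c 1 2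
                        + cnj z^3 / 6 * c 0 3" for z
  obtain d where "d > 0" and d: "\<And>u. u \<noteq> 0 \<Longrightarrow> dist u 0 < d \<Longrightarrow>
      norm (\<Sum>j\<le>3. \<Sum>k\<le>3 - j. u ^ j * cnj u ^ k / (fact j * fact k) * c j k) \<le> K * norm u ^ 3"
    using bound unfolding eventually_at by blast
  have q_zero: "q z = 0" if "z \<noteq> 0" for z
  proof -
    have "\<forall>\<^sub>F t in at_right 0. norm (q z + of_real t * s z) \<le> K * norm z ^ 3 * t"
    proof (rule eventually_at_rightI)
      show "0 < d / norm z" using \<open>d > 0\<close> that by simp
      fix t :: real assume t: "t \<in> {0<..<d / norm z}"
      then have "norm (of_real t * z) < d" "t > 0"
        using that by (auto simp: norm_mult field_simps)
      then have "norm (\<Sum>j\<le>3. \<Sum>k\<le>3 - j. (of_real t * z) ^ j * cnj (of_real t * z) ^ k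
                   / (fact j * fact k) * c j k) \<le> K * (t * norm z) ^ 3"
        using d[of "of_real t * z"] that by (simp add: norm_mult)
      also have "(\<Sum>j\<le>3. \<Sum>k\<le>3 - j. (of_real t * z) ^ j * cnj (of_real t * z) ^ k
                   / (fact j * fact k) * c j k) = of_real (t^2) * (q z + of_real t * s z)"
        unfolding sum_total_degree_le_3 using low
        by (simp add: q_def s_def fact_numeral power2_eq_square power3_eq_cube field_simps)
      finally have "t^2 * norm (q z + of_real t * s z) \<le> t^2 * (K * norm z ^ 3 * t)"
        using \<open>t > 0\<close> by (simp add: norm_mult power3_eq_cube power2_eq_square mult_ac)
      then show "norm (q z + of_real t * s z) \<le> K * norm z ^ 3 * t"
        using \<open>t > 0\<close> by simp
    qed
    moreover have "((\<lambda>t. K * norm z ^ 3 * t) \<longlongrightarrow> 0) (at_right 0)"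
      by (auto intro!: tendsto_eq_intros)
    moreover have "((\<lambda>t. norm (q z + of_real t * s z)) \<longlongrightarrow> norm (q z)) (at_right (0::real))"
      by (auto intro!: tendsto_eq_intros)
    ultimately have "norm (q z) \<le> 0"
      by (intro tendsto_le[of "at_right 0"]) auto
    then show ?thesis by simp
  qed
  have "(1 + \<i>)^2 = 2 * \<i>" "cnj (1 + \<i>) ^ 2 = - 2 * \<i>" "(1 + \<i>) * cnj (1 + \<i>) = 2"
    by (simp_all add: power2_eq_square algebra_simps complex_eq_iff)
  then have "c 2 0 / 2 + c 1 1 + c 0 2 / 2 = 0"
    "- c 2 0 / 2 + c 1 1 - c 0 2 / 2 = 0"
    "\<i> * c 2 0 + 2 * c 1 1 - \<i> * c 0 2 = 0"
    using q_zero[of 1] q_zero[of \<i>] q_zero[of "1 + \<i>"]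
    by (simp_all add: q_def power2_eq_square complex_eq_iff)
  then show ?thesis by (simp add: complex_eq_iff)
qed

definition uubar_poly :: "nat \<Rightarrow> (nat \<Rightarrow> nat \<Rightarrow> complex^'n) \<Rightarrow> complex \<Rightarrow> complex^'n" where
  "uubar_poly N c u = (\<Sum>j\<le>N. \<Sum>k\<le>N - j. (u ^ j * cnj u ^ k / (fact j * fact k)) *s c j k)"

lemma taylor_uubar_iff:
  "taylor_uubar N G c \<longleftrightarrow> (\<forall>e>0. \<forall>\<^sub>F u in at 0. norm (G u - uubar_poly N c u) \<le> e * norm u ^ N)"
  by (simp add: taylor_uubar_def uubar_poly_def)

lemma taylor_uubar_unif_iff:
  "taylor_uubar_unif N S W c \<longleftrightarrow>
     (\<forall>e>0. \<forall>\<^sub>F u in at 0. \<forall>\<theta>\<in>S. norm (W u \<theta> - uubar_poly N (\<lambda>j k. c j k \<theta>) u) \<le> e * norm u ^ N)"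
  by (simp add: taylor_uubar_unif_def uubar_poly_def)

lemma taylor_uubar_unif_at:
  assumes "taylor_uubar_unif N S W c" and "\<theta>0 \<in> S"
  shows "taylor_uubar N (\<lambda>u. W u \<theta>0) (\<lambda>j k. c j k \<theta>0)"
  using assms unfolding taylor_uubar_unif_iff taylor_uubar_iff by (auto elim!: eventually_mono)

lemma taylor_uubar_add:
  assumes "taylor_uubar N G c" and "taylor_uubar N H d"
  shows "taylor_uubar N (\<lambda>u. G u + H u) (\<lambda>j k. c j k + d j k)"
  unfolding taylor_uubar_iff
proof (intro allI impI)
  fix e :: real assume "e > 0"
  then have "\<forall>\<^sub>F u in at 0. norm (G u - uubar_poly N c u) \<le> e / 2 * norm u ^ N \<and>
                            norm (H u - uubar_poly N d u) \<le> e / 2 * norm u ^ N"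
    by (intro eventually_conj assms[unfolded taylor_uubar_iff, rule_format]) simp_all
  then show "\<forall>\<^sub>F u in at 0. norm (G u + H u - uubar_poly N (\<lambda>j k. c j k + d j k) u) \<le> e * norm u ^ N"
  proof (rule eventually_mono, elim conjE)
    fix u
    assume "norm (G u - uubar_poly N c u) \<le> e / 2 * norm u ^ N"
      and "norm (H u - uubar_poly N d u) \<le> e / 2 * norm u ^ N"
    moreover have "G u + H u - uubar_poly N (\<lambda>j k. c j k + d j k) u
                     = (G u - uubar_poly N c u) + (H u - uubar_poly N d u)"
      by (simp add: uubar_poly_def vector_add_ldistrib sum.distrib algebra_simps)
    ultimately show "norm (G u + H u - uubar_poly N (\<lambda>j k. c j k + d j k) u) \<le> e * norm u ^ N"
      using norm_triangle_ineq[of "G u - uubar_poly N c u" "H u - uubar_poly N d u"]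
      by (simp add: field_simps)
  qed
qed

lemma taylor_uubar_linear:
  fixes L :: "complex^'n \<Rightarrow> complex^'m"
  assumes expansion: "taylor_uubar N G c"
    and "bounded_linear L" and L_smult: "\<And>a v. L (a *s v) = a *s L v"
  shows "taylor_uubar N (\<lambda>u. L (G u)) (\<lambda>j k. L (c j k))"
  unfolding taylor_uubar_iff
proof (intro allI impI)
  fix e :: real assume "e > 0"
  obtain K where K: "\<And>v. norm (L v) \<le> norm v * K" "K > 0"
    using bounded_linear.pos_bounded[OF \<open>bounded_linear L\<close>] by blast
  have "\<forall>\<^sub>F u in at 0. norm (G u - uubar_poly N c u) \<le> e / K * norm u ^ N"
    using \<open>e > 0\<close> \<open>K > 0\<close> by (intro expansion[unfolded taylor_uubar_iff, rule_format]) simp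
  then show "\<forall>\<^sub>F u in at 0. norm (L (G u) - uubar_poly N (\<lambda>j k. L (c j k)) u) \<le> e * norm u ^ N"
  proof (rule eventually_mono)
    fix u
    assume bound: "norm (G u - uubar_poly N c u) \<le> e / K * norm u ^ N"
    have "L (G u) - uubar_poly N (\<lambda>j k. L (c j k)) u = L (G u - uubar_poly N c u)"
      using bounded_linear.linear[OF \<open>bounded_linear L\<close>]
      by (simp add: uubar_poly_def linear_diff linear_sum L_smult)
    also have "norm \<dots> \<le> norm (G u - uubar_poly N c u) * K"
      by (rule K(1))
    also have "\<dots> \<le> e / K * norm u ^ N * K"
      using mult_right_mono[OF bound, of K] \<open>K > 0\<close> by simp
    also have "\<dots> = e * norm u ^ N"
      using \<open>K > 0\<close> by simp
    finally show "norm (L (G u) - uubar_poly N (\<lambda>j k. L (c j k)) u) \<le> e * norm u ^ N" .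
  qed
qed

lemma integral_uubar_poly:
  fixes c :: "nat \<Rightarrow> nat \<Rightarrow> real \<Rightarrow> complex^'n" and h :: "real \<Rightarrow> complex"
  assumes h_cont: "continuous_on {a..b} h" and c_cont: "\<And>j k. continuous_on {a..b} (c j k)"
  shows "integral {a..b} (\<lambda>\<theta>. h \<theta> *s uubar_poly N (\<lambda>j k. c j k \<theta>) u)
           = uubar_poly N (\<lambda>j k. integral {a..b} (\<lambda>\<theta>. h \<theta> *s c j k \<theta>)) u"
proof -
  define coeff where "coeff j k = u ^ j * cnj u ^ k / (fact j * fact k)" for j k
  have integrable: "(\<lambda>\<theta>. (z * h \<theta>) *s c j k \<theta>) integrable_on {a..b}" for z j k
    by (intro integrable_continuous_interval continuous_on_vector_smult continuous_intros h_cont c_cont)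
  have "h \<theta> *s uubar_poly N (\<lambda>j k. c j k \<theta>) u = (\<Sum>j\<le>N. \<Sum>k\<le>N - j. (coeff j k * h \<theta>) *s c j k \<theta>)" for \<theta>
    by (simp add: uubar_poly_def coeff_def vec_eq_iff sum_component sum_distrib_left mult_ac)
  then have "integral {a..b} (\<lambda>\<theta>. h \<theta> *s uubar_poly N (\<lambda>j k. c j k \<theta>) u)
      = integral {a..b} (\<lambda>\<theta>. \<Sum>j\<le>N. \<Sum>k\<le>N - j. (coeff j k * h \<theta>) *s c j k \<theta>)"
    by presburger
  also have "\<dots> = (\<Sum>j\<le>N. \<Sum>k\<le>N - j. integral {a..b} (\<lambda>\<theta>. (coeff j k * h \<theta>) *s c j k \<theta>))"
    by (subst integral_sum) (auto intro!: integrable_sum integrable sum.cong integral_sum)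
  also have "\<dots> = (\<Sum>j\<le>N. \<Sum>k\<le>N - j. coeff j k *s integral {a..b} (\<lambda>\<theta>. h \<theta> *s c j k \<theta>))"
    using integral_vector_smult[OF integrable[of 1]] by (simp add: vector_smult_assoc)
  also have "\<dots> = uubar_poly N (\<lambda>j k. integral {a..b} (\<lambda>\<theta>. h \<theta> *s c j k \<theta>)) u"
    by (simp add: uubar_poly_def coeff_def)
  finally show ?thesis .
qed

lemma taylor_uubar_weighted_integral:
  fixes W :: "complex \<Rightarrow> real \<Rightarrow> complex^'n" and h :: "real \<Rightarrow> complex"
  assumes expansion: "taylor_uubar_unif N {a..b} W c" and "a \<le> b"
    and W_cont: "\<forall>\<^sub>F u in at 0. continuous_on {a..b} (W u)"
    and c_cont: "\<And>j k. continuous_on {a..b} (c j k)"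
    and h_cont: "continuous_on {a..b} h" and h_bound: "\<And>\<theta>. \<theta> \<in> {a..b} \<Longrightarrow> norm (h \<theta>) \<le> 1"
  shows "taylor_uubar N (\<lambda>u. integral {a..b} (\<lambda>\<theta>. h \<theta> *s W u \<theta>))
                          (\<lambda>j k. integral {a..b} (\<lambda>\<theta>. h \<theta> *s c j k \<theta>))"
  unfolding taylor_uubar_iff
proof (intro allI impI)
  fix e :: real assume "e > 0"
  define P where "P u \<theta> = uubar_poly N (\<lambda>j k. c j k \<theta>) u" for u \<theta>
  have integrable: "(\<lambda>\<theta>. h \<theta> *s \<phi> \<theta>) integrable_on {a..b}" if "continuous_on {a..b} \<phi>" for \<phi>
    by (intro integrable_continuous_interval continuous_on_vector_smult h_cont that)
  have P_cont: "continuous_on {a..b} (P u)" for u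
    unfolding P_def uubar_poly_def by (intro continuous_intros continuous_on_vector_smult c_cont)
  have "\<forall>\<^sub>F u in at 0. continuous_on {a..b} (W u) \<and>
          (\<forall>\<theta>\<in>{a..b}. norm (W u \<theta> - P u \<theta>) \<le> e / (b - a + 1) * norm u ^ N)"
    using \<open>e > 0\<close> \<open>a \<le> b\<close> unfolding P_def
    by (intro eventually_conj W_cont expansion[unfolded taylor_uubar_unif_iff, rule_format]) simp
  then show "\<forall>\<^sub>F u in at 0. norm (integral {a..b} (\<lambda>\<theta>. h \<theta> *s W u \<theta>) -
      uubar_poly N (\<lambda>j k. integral {a..b} (\<lambda>\<theta>. h \<theta> *s c j k \<theta>)) u) \<le> e * norm u ^ N"
  proof (rule eventually_mono, elim conjE)
    fix u
    assume W_u: "continuous_on {a..b} (W u)"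
      and bound: "\<forall>\<theta>\<in>{a..b}. norm (W u \<theta> - P u \<theta>) \<le> e / (b - a + 1) * norm u ^ N"
    have "integral {a..b} (\<lambda>\<theta>. h \<theta> *s W u \<theta>) - uubar_poly N (\<lambda>j k. integral {a..b} (\<lambda>\<theta>. h \<theta> *s c j k \<theta>)) u
        = integral {a..b} (\<lambda>\<theta>. h \<theta> *s (W u \<theta> - P u \<theta>))"
      using integral_diff[OF integrable[OF W_u] integrable[OF P_cont]]
      by (simp add: P_def integral_uubar_poly h_cont c_cont vector_ssub_ldistrib)
    also have "norm \<dots> \<le> e / (b - a + 1) * norm u ^ N * (b - a)"
    proof (rule integral_bound[OF \<open>a \<le> b\<close>])
      show "continuous_on {a..b} (\<lambda>\<theta>. h \<theta> *s (W u \<theta> - P u \<theta>))"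
        by (intro continuous_on_vector_smult h_cont continuous_intros W_u P_cont)
      fix \<theta> assume \<theta>: "\<theta> \<in> {a..b}"
      have "norm (h \<theta> *s (W u \<theta> - P u \<theta>)) = norm (h \<theta>) * norm (W u \<theta> - P u \<theta>)"
        by (rule norm_vector_smult_complex)
      also have "\<dots> \<le> 1 * (e / (b - a + 1) * norm u ^ N)"
        using \<theta> bound by (intro mult_mono h_bound) auto
      finally show "norm (h \<theta> *s (W u \<theta> - P u \<theta>)) \<le> e / (b - a + 1) * norm u ^ N"
        by simp
    qed
    also have "\<dots> \<le> e * norm u ^ N"
      using \<open>e > 0\<close> \<open>a \<le> b\<close> by (simp add: field_simps mult_left_mono)
    finally show "norm (integral {a..b} (\<lambda>\<theta>. h \<theta> *s W u \<theta>) -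
        uubar_poly N (\<lambda>j k. integral {a..b} (\<lambda>\<theta>. h \<theta> *s c j k \<theta>)) u) \<le> e * norm u ^ N" .
  qed
qed

lemma taylor_uubar_quadratic_coeffs_annihilated:
  fixes G :: "complex \<Rightarrow> complex^'n"
  assumes expansion: "taylor_uubar 3 G c" and annihilated: "\<forall>\<^sub>F u in at 0. rdot p (G u) = 0"
    and low: "rdot p (c 0 0) = 0" "rdot p (c 1 0) = 0" "rdot p (c 0 1) = 0"
  shows "rdot p (c 2 0) = 0 \<and> rdot p (c 1 1) = 0 \<and> rdot p (c 0 2) = 0"
proof -
  obtain K where K: "\<And>v. norm (rdot p v) \<le> norm v * K" "K > 0"
    using bounded_linear.pos_bounded[OF bounded_linear_rdot] by blast
  have "\<forall>\<^sub>F u in at 0. rdot p (G u) = 0 \<and> norm (G u - uubar_poly 3 c u) \<le> 1 * norm u ^ 3"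
    by (intro eventually_conj annihilated expansion[unfolded taylor_uubar_iff, rule_format]) simp
  then have "\<forall>\<^sub>F u in at 0. norm (\<Sum>j\<le>3. \<Sum>k\<le>3 - j. u ^ j * cnj u ^ k / (fact j * fact k) * rdot p (c j k))
      \<le> K * norm u ^ 3"
  proof (rule eventually_mono, elim conjE)
    fix u
    assume "rdot p (G u) = 0" and bound: "norm (G u - uubar_poly 3 c u) \<le> 1 * norm u ^ 3"
    then have "(\<Sum>j\<le>3. \<Sum>k\<le>3 - j. u ^ j * cnj u ^ k / (fact j * fact k) * rdot p (c j k))
        = - rdot p (G u - uubar_poly 3 c u)"
      by (simp add: uubar_poly_def rdot_diff rdot_sum rdot_smult)
    then have "norm (\<Sum>j\<le>3. \<Sum>k\<le>3 - j. u ^ j * cnj u ^ k / (fact j * fact k) * rdot p (c j k))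
        \<le> norm (G u - uubar_poly 3 c u) * K"
      using K(1)[of "G u - uubar_poly 3 c u"] by simp
    also have "\<dots> \<le> K * norm u ^ 3"
      using bound \<open>K > 0\<close> by (simp add: mult_right_mono mult.commute)
    finally show "norm (\<Sum>j\<le>3. \<Sum>k\<le>3 - j. u ^ j * cnj u ^ k / (fact j * fact k) * rdot p (c j k))
        \<le> K * norm u ^ 3" .
  qed
  then show ?thesis
    by (rule quadratic_coeffs_vanish_of_cubic_bound[OF low])
qed

section \<open>The bilinear form against an exponential adjoint function\<close>

lemma bform_exp_left:
  fixes B :: "real^'n^'n" and p :: "complex^'n" and \<phi> :: "real \<Rightarrow> complex^'n"
  assumes "continuous_on {-r..0} \<phi>"
  shows "bform B r (\<lambda>z. exp (- \<i> * of_real \<omega> * of_real z) *s p) \<phi>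
    = rdot p (\<phi> 0 + exp (- \<i> * of_real \<omega> * of_real r)
                     *s (cmat B *v integral {-r..0} (\<lambda>\<theta>. exp (- \<i> * of_real \<omega> * of_real \<theta>) *s \<phi> \<theta>)))"
proof -
  define ex where "ex \<theta> = exp (- \<i> * of_real \<omega> * of_real \<theta>)" for \<theta> :: real
  have integrable: "(\<lambda>\<theta>. ex \<theta> *s \<phi> \<theta>) integrable_on {-r..0}"
    unfolding ex_def
    by (intro integrable_continuous_interval continuous_on_vector_smult continuous_intros assms)
  have "rdot (ex (z + r) *s p) (cmat B *v \<phi> z) = ex r * rdot p (cmat B *v (ex z *s \<phi> z))" for z
    by (simp add: ex_def rdot_smult_left vector_scalar_commute rdot_smult algebra_simps exp_add[symmetric])
  then have "integral {-r..0} (\<lambda>z. rdot (ex (z + r) *s p) (cmat B *v \<phi> z))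
      = ex r * integral {-r..0} (\<lambda>z. rdot p (cmat B *v (ex z *s \<phi> z)))"
    by simp
  also have "integral {-r..0} (\<lambda>z. rdot p (cmat B *v (ex z *s \<phi> z)))
      = rdot p (cmat B *v integral {-r..0} (\<lambda>z. ex z *s \<phi> z))"
    using integral_linear[OF integrable bounded_linear_compose[OF bounded_linear_rdot matrix_vector_mul_bounded_linear]]
    by (simp add: o_def)
  finally show ?thesis
    unfolding bform_def by (simp add: ex_def rdot_add rdot_smult)
qed

text \<open>For an exponential \<open>\<Psi>\<close> the form \<open>bform B r \<Psi>\<close> is \<open>rdot p\<close> composed with a linear map \<open>T\<close>
  (evaluation at \<open>0\<close> plus a weighted integral), so the expansion of \<open>W\<close> transfers to \<open>T \<circ> W\<close>.\<close>
lemma bform_exp_left_quadratic_coeffs_vanish: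
  fixes B :: "real^'n^'n" and p :: "complex^'n" and W :: "complex \<Rightarrow> real \<Rightarrow> complex^'n"
    and c :: "nat \<Rightarrow> nat \<Rightarrow> real \<Rightarrow> complex^'n" and \<omega> r :: real
  defines "\<Psi> \<equiv> \<lambda>z. exp (- \<i> * of_real \<omega> * of_real z) *s p"
  assumes "r > 0" and expansion: "taylor_uubar_unif 3 {-r..0} W c"
    and W_cont: "\<forall>\<^sub>F u in at 0. continuous_on {-r..0} (W u)"
    and W_null: "\<forall>\<^sub>F u in at 0. bform B r \<Psi> (W u) = 0"
    and c_cont: "\<And>j k. continuous_on {-r..0} (c j k)"
    and c_low: "\<And>j k \<theta>. j + k < 2 \<Longrightarrow> \<theta> \<in> {-r..0} \<Longrightarrow> c j k \<theta> = 0"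
  shows "bform B r \<Psi> (c 2 0) = 0 \<and> bform B r \<Psi> (c 1 1) = 0 \<and> bform B r \<Psi> (c 0 2) = 0"
proof -
  define ex where "ex \<theta> = exp (- \<i> * of_real \<omega> * of_real \<theta>)" for \<theta> :: real
  define L where "L v = ex r *s (cmat B *v v)" for v :: "complex^'n"
  define T where "T \<phi> = \<phi> 0 + L (integral {-r..0} (\<lambda>\<theta>. ex \<theta> *s \<phi> \<theta>))" for \<phi> :: "real \<Rightarrow> complex^'n"
  have bform_T: "bform B r \<Psi> \<phi> = rdot p (T \<phi>)" if "continuous_on {-r..0} \<phi>" for \<phi>
    unfolding \<Psi>_def T_def L_def ex_def by (rule bform_exp_left[OF that])
  have "taylor_uubar 3 (\<lambda>u. T (W u)) (\<lambda>j k. T (c j k))"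
    unfolding T_def
  proof (rule taylor_uubar_add)
    show "taylor_uubar 3 (\<lambda>u. W u 0) (\<lambda>j k. c j k 0)"
      using expansion by (rule taylor_uubar_unif_at) (use \<open>r > 0\<close> in simp)
    have "norm (ex \<theta>) \<le> 1" for \<theta>
      by (simp add: ex_def)
    moreover have "continuous_on {-r..0} ex"
      unfolding ex_def by (intro continuous_intros)
    ultimately have "taylor_uubar 3 (\<lambda>u. integral {-r..0} (\<lambda>\<theta>. ex \<theta> *s W u \<theta>))
                                    (\<lambda>j k. integral {-r..0} (\<lambda>\<theta>. ex \<theta> *s c j k \<theta>))"
      using \<open>r > 0\<close> by (intro taylor_uubar_weighted_integral[OF expansion _ W_cont c_cont]) auto
    moreover have "bounded_linear L"
      unfolding L_def
      by (rule bounded_linear_compose[OF bounded_linear_vector_smult matrix_vector_mul_bounded_linear])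
    moreover have "L (a *s v) = a *s L v" for a v
      by (simp add: L_def vector_scalar_commute mult.commute)
    ultimately show "taylor_uubar 3 (\<lambda>u. L (integral {-r..0} (\<lambda>\<theta>. ex \<theta> *s W u \<theta>)))
                                    (\<lambda>j k. L (integral {-r..0} (\<lambda>\<theta>. ex \<theta> *s c j k \<theta>)))"
      by (rule taylor_uubar_linear)
  qed
  moreover have "\<forall>\<^sub>F u in at 0. rdot p (T (W u)) = 0"
    using W_cont W_null by eventually_elim (simp add: bform_T)
  moreover have "T (c j k) = 0" if "j + k < 2" for j k
  proof -
    have "integral {-r..0} (\<lambda>\<theta>. ex \<theta> *s c j k \<theta>) = integral {-r..0} (\<lambda>\<theta>. 0)"
      using c_low[OF that] by (intro integral_cong) simp
    then show ?thesis
      using c_low[OF that, of 0] \<open>r > 0\<close> by (simp add: T_def L_def)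
  qed
  ultimately have "rdot p (T (c 2 0)) = 0 \<and> rdot p (T (c 1 1)) = 0 \<and> rdot p (T (c 0 2)) = 0"
    by (intro taylor_uubar_quadratic_coeffs_annihilated) auto
  then show ?thesis
    by (simp add: bform_T c_cont)
qed

theorem proposition3p1:
  fixes f :: "(real^'n) \<times> (real^'n) \<Rightarrow> real^'n"
    and D :: "((real^'n) \<times> (real^'n)) set"
    and A B :: "real^'n^'n"
    and r \<omega> \<delta> :: real and k :: nat
    and phi0 psi0 :: "complex^'n"
    and w :: "complex \<Rightarrow> real \<Rightarrow> real^'n"
    and wc :: "nat \<Rightarrow> nat \<Rightarrow> real \<Rightarrow> complex^'n"
    and fc :: "nat \<Rightarrow> nat \<Rightarrow> complex^'n"
  assumes r_pos: "r > 0" and k_gt: "k > 3"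
    and D_open: "open D" and D0: "(0, 0) \<in> D" and f0: "f (0, 0) = 0"
    and f_Ck: "Ck_on k D f"
    and f_lin: "(f has_derivative (\<lambda>(x, y). A *v x + B *v y)) (at (0, 0))"
    and \<omega>_pos: "\<omega> > 0"
    and root_p: "charfun A B r (\<i> * complex_of_real \<omega>) = 0"
    and root_m: "charfun A B r (- \<i> * complex_of_real \<omega>) = 0"
    and simple_p: "deriv (charfun A B r) (\<i> * complex_of_real \<omega>) \<noteq> 0"
    and simple_m: "deriv (charfun A B r) (- \<i> * complex_of_real \<omega>) \<noteq> 0"
    and other_roots: "\<forall>lam. charfun A B r lam = 0 \<longrightarrow> lam \<noteq> \<i> * complex_of_real \<omega>
                        \<longrightarrow> lam \<noteq> - \<i> * complex_of_real \<omega> \<longrightarrow> Re lam < 0"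
    and phi0_nz: "phi0 \<noteq> 0"
    and phi0_eig: "charmat A B r (\<i> * complex_of_real \<omega>) *v phi0 = 0"
    and psi0_nz: "psi0 \<noteq> 0"
    and psi0_eig: "psi0 v* (- charmat A B r (\<i> * complex_of_real \<omega>)) = 0"
  defines "\<phi>1 \<equiv> \<lambda>s::real. exp (\<i> * complex_of_real \<omega> * complex_of_real s) *s phi0"
  defines "\<phi>2 \<equiv> \<lambda>s::real. vcnj (\<phi>1 s)"
  defines "Psi0 \<equiv> (1 / (rdot psi0 phi0 + rdot psi0 (cmat B *v phi0)
                     * exp (- \<i> * complex_of_real \<omega> * complex_of_real r) * complex_of_real r)) *s psi0"
  defines "\<Psi>1 \<equiv> \<lambda>z::real. exp (- \<i> * complex_of_real \<omega> * complex_of_real z) *s Psi0"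
  defines "\<Phi> \<equiv> \<lambda>(u::complex) (\<theta>::real). rvec (u *s \<phi>1 \<theta> + cnj u *s \<phi>2 \<theta>) + w u \<theta>"
  defines "fhat \<equiv> \<lambda>(x, y). f (x, y) - A *v x - B *v y"
  defines "g \<equiv> \<lambda>j k. rdot Psi0 (fc j k)"
  assumes \<delta>_pos: "\<delta> > 0"
    and w_cont: "\<forall>u. norm u < \<delta> \<longrightarrow> continuous_on {-r..0} (w u)"
    and w_in_N: "\<forall>u. norm u < \<delta> \<longrightarrow>
           bform B r \<Psi>1 (\<lambda>\<theta>. cvec (w u \<theta>)) = 0 \<and>
           bform B r (\<lambda>z. vcnj (\<Psi>1 z)) (\<lambda>\<theta>. cvec (w u \<theta>)) = 0"
    and w_invariant: "\<forall>u0. norm u0 < \<delta> \<longrightarrow>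
           (\<exists>T>0. \<exists>x U. dde_solution f r D T x \<and>
              (\<forall>\<theta>\<in>{-r..0}. x \<theta> = \<Phi> u0 \<theta>) \<and>
              (\<forall>t\<in>{0..T}. norm (U t) < \<delta> \<and> (\<forall>\<theta>\<in>{-r..0}. x (t + \<theta>) = \<Phi> (U t) \<theta>)))"
    and wc_cont: "\<forall>j k. continuous_on {-r..0} (wc j k)"
    and wc_low: "\<forall>j k. j + k < 2 \<longrightarrow> (\<forall>\<theta>\<in>{-r..0}. wc j k \<theta> = 0)"
    and w_exp: "taylor_uubar_unif 3 {-r..0} (\<lambda>u \<theta>. cvec (w u \<theta>)) wc"
    and f_exp: "taylor_uubar 3 (\<lambda>u. cvec (fhat (\<Phi> u 0, \<Phi> u (- r)))) fc"
  defines "E \<equiv> exp (- \<i> * complex_of_real \<omega> * complex_of_real r)"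
  defines "I \<equiv> \<lambda>j k. integral {-r..0} (\<lambda>\<theta>. exp (- \<i> * complex_of_real \<omega> * complex_of_real \<theta>) *s wc j k \<theta>)"
  defines "R1 \<equiv> (- g 2 1 * complex_of_real r * E) *s \<phi>1 0
        + (\<i> / (2 * complex_of_real \<omega>) * cnj (g 1 2)
             * (exp (\<i> * complex_of_real \<omega> * complex_of_real r) - E)) *s \<phi>2 0
        - (2 * g 1 1 * E) *s I 2 0
        - ((g 2 0 + 2 * cnj (g 1 1)) * E) *s I 1 1
        - (cnj (g 0 2) * E) *s I 0 2"
  defines "R2 \<equiv> g 2 1 *s \<phi>1 0 + cnj (g 1 2) *s \<phi>2 0 - fc 2 1
        + (2 * g 1 1) *s wc 2 0 0 + (g 2 0 + 2 * cnj (g 1 1)) *s wc 1 1 0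
        + cnj (g 0 2) *s wc 0 2 0"
  shows "\<exists>X. charmat A B r (\<i> * complex_of_real \<omega>) *v X = cmat B *v R1 - R2"
proof -
  let ?M0 = "charmat A B r (\<i> * complex_of_real \<omega>)"
  have psi_null: "psi0 v* ?M0 = 0"
    using psi0_eig by (simp add: vec_eq_iff vector_matrix_mult_def sum_negf)
  have "rdot psi0 phi0 + rdot psi0 (cmat B *v phi0) * E * of_real r \<noteq> 0"
    using charmat_normalization_nonzero[OF simple_p psi_null psi0_nz phi0_eig phi0_nz] by (simp add: E_def)
  then have Psi_nz: "Psi0 \<noteq> 0" and Psi_null: "Psi0 v* ?M0 = 0"
    and normalized: "rdot Psi0 phi0 = 1 - rdot Psi0 (cmat B *v phi0) * E * of_real r"
    using psi0_nz psi_null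
    by (simp_all add: Psi0_def E_def rdot_smult_left scalar_vector_matrix_assoc field_simps)
  obtain a where Psi_a: "Psi0 $ a \<noteq> 0"
    using Psi_nz by (metis vec_eq_iff zero_index)
  have center: "rdot Psi0 (wc j k 0) = - E * rdot Psi0 (cmat B *v I j k)"
    if "(j, k) \<in> {(2, 0), (1, 1), (0, 2)}" for j k
  proof -
    have small: "\<forall>\<^sub>F u in at 0. norm u < \<delta>"
      using \<delta>_pos by (auto simp: eventually_at)
    then have "\<forall>\<^sub>F u in at 0. continuous_on {-r..0} (\<lambda>\<theta>. cvec (w u \<theta>))"
      and "\<forall>\<^sub>F u in at 0. bform B r \<Psi>1 (\<lambda>\<theta>. cvec (w u \<theta>)) = 0"
      by (eventually_elim, simp add: w_cont continuous_on_cvec w_in_N)+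
    then have "bform B r \<Psi>1 (wc j k) = 0"
      using bform_exp_left_quadratic_coeffs_vanish[OF r_pos w_exp] wc_cont wc_low that
      unfolding \<Psi>1_def by auto
    then show ?thesis
      using bform_exp_left[OF wc_cont[rule_format], of B \<omega> Psi0 j k]
      by (simp add: \<Psi>1_def E_def I_def rdot_add rdot_smult eq_neg_iff_add_eq_0)
  qed
  have "rdot Psi0 (cmat B *v R1 - R2) = 0"
    using center[of 2 0] center[of 1 1] center[of 0 2]
    unfolding R1_def R2_def g_def \<phi>1_def \<phi>2_def E_def
    by (simp add: matrix_vector_right_distrib matrix_vector_mult_diff_distrib vector_scalar_commute
        rdot_add rdot_diff rdot_smult normalized[unfolded E_def] algebra_simps diff_divide_distrib
        rdot_conj_null_vector[OF Psi_null phi0_eig \<omega>_pos])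
  then show ?thesis
    using solvable_if_orthogonal_to_left_null_vector[OF Psi_null Psi_a
            det_bordered_charmat_nonzero[OF simple_p Psi_null Psi_a]]
    by blast
qed

end
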